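(* Fix an integer $n$. Let $A=\mathbb Z[t_1^{\pm1},t_3^{\pm1}]$ regarded as a free abelian group on the monomials $t_1^\alpha t_3^\beta$, and let $K\subset A$ be the subgroup generated by the elements $$t_1^{\alpha-\beta}t_3^{-\beta}-t_1^{\alpha}t_3^{\alpha-\beta}+(-1)^{n-1}\big(t_1^{\beta}t_3^{\beta-\alpha}-t_1^{\beta-\alpha}t_3^{-\alpha}\big),\qquad \alpha,\beta\in\mathbb Z.$$ Then $A/K$ is isomorphic to the direct sum of a free abelian group and an abelian group in which every element has order at most $2$. *)

theory Defs
  imports "HOL-Algebra.Free_Abelian_Groups"
begin

text \<open>The Laurent polynomial ring Z[t1^{+-1}, t3^{+-1}] as a free abelian group on the
  monomials; the monomial t1^a t3^b corresponds to the basis element frag_of (a, b).\<close>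
definition LaurentA :: "(int \<times> int \<Rightarrow>\<^sub>0 int) monoid" where
  "LaurentA = free_Abelian_group UNIV"

definition Kgen :: "int \<Rightarrow> int \<Rightarrow> int \<Rightarrow> (int \<times> int \<Rightarrow>\<^sub>0 int)" where
  "Kgen n \<alpha> \<beta> =
     frag_of (\<alpha> - \<beta>, - \<beta>) - frag_of (\<alpha>, \<alpha> - \<beta>)
     + frag_cmul (if odd n then 1 else -1)
         (frag_of (\<beta>, \<beta> - \<alpha>) - frag_of (\<beta> - \<alpha>, - \<alpha>))"

definition Ksub :: "int \<Rightarrow> (int \<times> int \<Rightarrow>\<^sub>0 int) set" where
  "Ksub n = generate LaurentA {Kgen n \<alpha> \<beta> | \<alpha> \<beta>. True}"

end

theory Submission
  imports Defs
begin

text \<open>Write the monomial t1^a t3^b as the point (a, b) and let s = (-1)^(n-1). With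
  rot (a, b) = (a - b, a), of order 6, and the involution mirror (a, b) = (-b, -a), the generator of
  K indexed by alpha, beta is symm s v - symm s (rot v) for v = (alpha - beta, -beta), where
  symm s v = [v] + s [mirror v]. Since also symm s (mirror v) = s symm s v, the quotient splits along
  the orbits of the dihedral group of order 12 generated by rot and mirror. It is generated by the
  [u] with u of positive coordinate sum, which stay free, by one class (up to sign) of the
  elements symm s v for each orbit, and by the [w] with w of coordinate sum zero. On the free
  orbits (12 points) the orbit class is free. On the smaller orbits, which meet the mirror lines,
  the orbit class is free, of order 2 or zero depending on s, and the points of sum zero give free
  generators (s = -1) or elements [w] - [-w] of order 2 (s = 1).

  This is made explicit by a homomorphism coord from A onto a free abelian group times a group of
  exponent 2 which kills K. Lifting the coordinates of [p] back to A gives an element congruent to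
  [p] modulo K, and the lift of anything in the kernel of coord lies in K; so the kernel is K.\<close>

definition sym_diff_group :: "'a set \<Rightarrow> 'a set monoid" where
  "sym_diff_group B = \<lparr>carrier = {X. finite X \<and> X \<subseteq> B}, monoid.mult = sym_diff, one = {}\<rparr>"

lemma comm_group_sym_diff_group: "comm_group (sym_diff_group B)"
proof -
  have "group (sym_diff_group B)"
    by (rule groupI) (auto simp: sym_diff_group_def intro!: exI[where x=x for x])
  then show ?thesis
    by (rule group.group_comm_groupI) (auto simp: sym_diff_group_def)
qed

lemma sym_diff_group_square: "x \<otimes>\<^bsub>sym_diff_group B\<^esub> x = \<one>\<^bsub>sym_diff_group B\<^esub>"
  by (simp add: sym_diff_group_def)

definition par_sign :: "int \<Rightarrow> int" where
  "par_sign n = (if odd n then 1 else -1)"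

lemma par_sign_cases: "par_sign n \<in> {1, -1}"
  by (simp add: par_sign_def)

lemma group_LaurentA: "group LaurentA"
  by (simp add: LaurentA_def)

lemma carrier_LaurentA [simp]: "carrier LaurentA = UNIV"
  by (auto simp: LaurentA_def)

lemma subgroup_Ksub: "subgroup (Ksub n) LaurentA"
  unfolding Ksub_def by (rule group.generate_is_subgroup[OF group_LaurentA]) simp

lemma Ksub_zero: "0 \<in> Ksub n"
  using subgroup.one_closed[OF subgroup_Ksub[of n]] by (simp add: LaurentA_def)

lemma Ksub_add: "x \<in> Ksub n \<Longrightarrow> y \<in> Ksub n \<Longrightarrow> x + y \<in> Ksub n"
  using subgroup.m_closed[OF subgroup_Ksub[of n]] by (simp add: LaurentA_def)

lemma Ksub_uminus: "x \<in> Ksub n \<Longrightarrow> - x \<in> Ksub n"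
  using subgroup.m_inv_closed[OF subgroup_Ksub[of n]] by (simp add: LaurentA_def)

lemma Ksub_diff: "x \<in> Ksub n \<Longrightarrow> y \<in> Ksub n \<Longrightarrow> x - y \<in> Ksub n"
  by (metis Ksub_add Ksub_uminus diff_conv_add_uminus)

lemma Ksub_minus_commute: "x - y \<in> Ksub n \<Longrightarrow> y - x \<in> Ksub n"
  using Ksub_uminus by fastforce

lemma Ksub_cmul: "x \<in> Ksub n \<Longrightarrow> frag_cmul k x \<in> Ksub n"
  by (rule frag_closure_minus_cmul[where P="\<lambda>x. x \<in> Ksub n"]) (auto intro: Ksub_zero Ksub_diff)

lemma Kgen_in_Ksub: "Kgen n a b \<in> Ksub n"
  unfolding Ksub_def by (rule generate.incl) blast

lemma Ksub_sum: "(\<And>i. i \<in> I \<Longrightarrow> F i \<in> Ksub n) \<Longrightarrow> sum F I \<in> Ksub n"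
  by (induction I rule: infinite_finite_induct) (auto intro: Ksub_zero Ksub_add)

lemma Ksub_frag_extend: "(\<And>i. f i \<in> Ksub n) \<Longrightarrow> frag_extend f c \<in> Ksub n"
  unfolding frag_extend_def by (auto intro!: Ksub_sum Ksub_cmul)

section \<open>The dihedral action on exponents\<close>

type_synonym point = "int \<times> int"

definition rot :: "point \<Rightarrow> point" where
  "rot p = (fst p - snd p, fst p)"

definition mirror :: "point \<Rightarrow> point" where
  "mirror p = (- snd p, - fst p)"

definition antipode :: "point \<Rightarrow> point" where
  "antipode p = (- fst p, - snd p)"

definition psum :: "point \<Rightarrow> int" where
  "psum p = fst p + snd p"

text \<open>The six linear forms below vanish on the mirror lines of the dihedral group generated by
  rot and mirror. Apart from the origin, orbits meeting a + b = 0, 2a = b or a = 2b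
  (line_type) and orbits meeting a = 0, b = 0 or a = b (axis_type) have 6 points; all other
  orbits have 12 points, and on them sign_form is nonzero, invariant under rot and odd under
  mirror.\<close>

definition line_type :: "point \<Rightarrow> bool" where
  "line_type p \<longleftrightarrow> psum p * (2 * fst p - snd p) * (fst p - 2 * snd p) = 0"

definition axis_type :: "point \<Rightarrow> bool" where
  "axis_type p \<longleftrightarrow> \<not> line_type p \<and> fst p * snd p * (fst p - snd p) = 0"

definition sign_form :: "point \<Rightarrow> int" where
  "sign_form p =
     psum p * (2 * fst p - snd p) * (fst p - 2 * snd p) * (fst p * snd p * (fst p - snd p))"

definition rot_orbit :: "point \<Rightarrow> point set" where
  "rot_orbit p = {p, rot p, rot (rot p), rot (rot (rot p)), rot (rot (rot (rot p))),
                  rot (rot (rot (rot (rot p))))}"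

definition dih_orbit :: "point \<Rightarrow> point set" where
  "dih_orbit p = rot_orbit p \<union> mirror ` rot_orbit p"

lemma rot_Pair: "rot (a, b) = (a - b, a)"
  by (simp add: rot_def)

lemma mirror_Pair: "mirror (a, b) = (- b, - a)"
  by (simp add: mirror_def)

lemma mirror_mirror [simp]: "mirror (mirror p) = p"
  by (simp add: mirror_def)

lemma rot_orbit_explicit:
  "rot_orbit (a, b) = {(a, b), (a - b, a), (- b, a - b), (- a, - b), (b - a, - a), (b, b - a)}"
  by (simp add: rot_orbit_def rot_Pair)

lemma dih_orbit_explicit:
  "dih_orbit (a, b) = {(a, b), (a - b, a), (- b, a - b), (- a, - b), (b - a, - a), (b, b - a),
     (- b, - a), (- a, b - a), (b - a, b), (b, a), (a, a - b), (a - b, - b)}"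
  by (simp add: dih_orbit_def rot_orbit_explicit mirror_Pair insert_commute)

lemma rot_orbit_induct:
  assumes "q \<in> rot_orbit p" "P p" "\<And>x. P x \<Longrightarrow> P (rot x)"
  shows "P q"
  using assms(1) unfolding rot_orbit_def by (elim insertE emptyE) (simp_all add: assms(2,3))

lemma self_in_dih_orbit: "p \<in> dih_orbit p"
  by (simp add: dih_orbit_def rot_orbit_def)

lemma mirror_in_dih_orbit: "mirror p \<in> dih_orbit p"
  by (simp add: dih_orbit_def rot_orbit_def)

lemma antipode_in_rot_orbit: "antipode p \<in> rot_orbit p"
  by (cases p) (simp add: rot_orbit_explicit antipode_def)

lemma antipode_in_dih_orbit: "antipode p \<in> dih_orbit p"
  using antipode_in_rot_orbit by (auto simp: dih_orbit_def)

lemma dih_orbit_rot: "dih_orbit (rot p) = dih_orbit p"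
  by (cases p) (auto simp: dih_orbit_explicit rot_Pair)

lemma dih_orbit_mirror: "dih_orbit (mirror p) = dih_orbit p"
  by (cases p) (auto simp: dih_orbit_explicit mirror_Pair)

lemma dih_orbit_cases:
  assumes "q \<in> dih_orbit p"
  obtains "q \<in> rot_orbit p" | x where "x \<in> rot_orbit p" "q = mirror x"
  using assms by (auto simp: dih_orbit_def)

lemma dih_orbit_eq:
  assumes "q \<in> dih_orbit p"
  shows "dih_orbit q = dih_orbit p"
proof -
  have "dih_orbit x = dih_orbit p" if "x \<in> rot_orbit p" for x
    using that by (rule rot_orbit_induct) (simp_all add: dih_orbit_rot)
  with assms show ?thesis
    by (cases rule: dih_orbit_cases) (simp_all add: dih_orbit_mirror)
qed

lemma psum_mirror: "psum (mirror p) = - psum p"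
  by (simp add: psum_def mirror_def)

lemma psum_antipode: "psum (antipode p) = - psum p"
  by (simp add: psum_def antipode_def)

lemma mirror_fixed: "psum p = 0 \<Longrightarrow> mirror p = p"
  by (cases p) (simp add: psum_def mirror_Pair)

lemma line_type_rot: "line_type (rot p) = line_type p"
  by (cases p) (auto simp: line_type_def psum_def rot_Pair algebra_simps)

lemma line_type_mirror: "line_type (mirror p) = line_type p"
  by (cases p) (auto simp: line_type_def psum_def mirror_Pair algebra_simps)

lemma axis_type_rot: "axis_type (rot p) = axis_type p"
  by (cases p) (auto simp: axis_type_def line_type_def psum_def rot_Pair algebra_simps)

lemma axis_type_mirror: "axis_type (mirror p) = axis_type p"
  by (cases p) (auto simp: axis_type_def line_type_def psum_def mirror_Pair algebra_simps)

lemma sign_form_rot: "sign_form (rot p) = sign_form p"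
  by (cases p) (simp add: sign_form_def psum_def rot_Pair algebra_simps)

lemma sign_form_mirror: "sign_form (mirror p) = - sign_form p"
  by (cases p) (simp add: sign_form_def psum_def mirror_Pair algebra_simps)

lemma sign_form_nonzero_iff: "sign_form p \<noteq> 0 \<longleftrightarrow> \<not> line_type p \<and> \<not> axis_type p"
  by (auto simp: sign_form_def line_type_def axis_type_def)

lemma line_type_if_psum_zero: "psum p = 0 \<Longrightarrow> line_type p"
  by (simp add: line_type_def)

lemma axis_type_nonzero: "axis_type p \<Longrightarrow> p \<noteq> (0, 0)"
  by (auto simp: axis_type_def line_type_def)

lemma rot_orbit_invariants:
  "q \<in> rot_orbit p \<Longrightarrow>
     line_type q = line_type p \<and> axis_type q = axis_type p \<and> sign_form q = sign_form p"
  by (erule rot_orbit_induct) (auto simp: line_type_rot axis_type_rot sign_form_rot)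

lemma dih_orbit_invariants:
  assumes "q \<in> dih_orbit p"
  shows "line_type q = line_type p" "axis_type q = axis_type p"
    and "\<bar>sign_form q\<bar> = \<bar>sign_form p\<bar>"
  using assms
  by (cases rule: dih_orbit_cases;
      auto dest: rot_orbit_invariants simp: line_type_mirror axis_type_mirror sign_form_mirror)+

section \<open>The generators of K\<close>

definition symm :: "int \<Rightarrow> point \<Rightarrow> (point \<Rightarrow>\<^sub>0 int)" where
  "symm s p = frag_of p + frag_cmul s (frag_of (mirror p))"

lemma frag_cmul_diff_right: "frag_cmul c (a - b) = frag_cmul c a - frag_cmul c b"
  by (rule poly_mapping_eqI) (simp add: lookup_minus algebra_simps)

lemma Kgen_eq_symm_diff:
  "Kgen n a b = symm (par_sign n) (a - b, - b) - symm (par_sign n) (rot (a - b, - b))"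
  by (rule poly_mapping_eqI)
     (simp add: Kgen_def symm_def par_sign_def rot_Pair mirror_Pair lookup_add lookup_minus)

lemma symm_diff_rot_in_Ksub: "symm (par_sign n) v - symm (par_sign n) (rot v) \<in> Ksub n"
proof -
  obtain a b where "v = (a, b)"
    by (cases v)
  then have "Kgen n (a - b) (- b) = symm (par_sign n) v - symm (par_sign n) (rot v)"
    by (simp add: Kgen_eq_symm_diff)
  then show ?thesis
    by (metis Kgen_in_Ksub)
qed

lemma symm_mirror: "s \<in> {1, -1} \<Longrightarrow> symm s (mirror v) = frag_cmul s (symm s v)"
  by (rule poly_mapping_eqI) (auto simp: symm_def lookup_add)

lemma symm_psum_zero_pos: "psum w = 0 \<Longrightarrow> symm 1 w = frag_cmul 2 (frag_of w)"
  by (rule poly_mapping_eqI) (simp add: symm_def mirror_fixed lookup_add)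

lemma symm_psum_zero_neg: "psum w = 0 \<Longrightarrow> symm (-1) w = 0"
  by (simp add: symm_def mirror_fixed)

lemma symm_rot_orbit_in_Ksub:
  assumes "q \<in> rot_orbit p"
  shows "symm (par_sign n) q - symm (par_sign n) p \<in> Ksub n"
  using assms
proof (rule rot_orbit_induct)
  show "symm (par_sign n) p - symm (par_sign n) p \<in> Ksub n"
    by (simp add: Ksub_zero)
next
  fix x
  assume "symm (par_sign n) x - symm (par_sign n) p \<in> Ksub n"
  with Ksub_minus_commute[OF symm_diff_rot_in_Ksub[of n x]]
  show "symm (par_sign n) (rot x) - symm (par_sign n) p \<in> Ksub n"
    using Ksub_add by fastforce
qed

lemma symm_dih_orbit_cases:
  assumes "q \<in> dih_orbit p"
  obtains "sign_form q = sign_form p" "symm (par_sign n) q - symm (par_sign n) p \<in> Ksub n"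
  | "sign_form q = - sign_form p"
    "symm (par_sign n) q - frag_cmul (par_sign n) (symm (par_sign n) p) \<in> Ksub n"
  using assms
proof (cases rule: dih_orbit_cases)
  case 1
  then show ?thesis
    using that rot_orbit_invariants symm_rot_orbit_in_Ksub by blast
next
  case (2 x)
  have "frag_cmul (par_sign n) (symm (par_sign n) x - symm (par_sign n) p) \<in> Ksub n"
    using Ksub_cmul symm_rot_orbit_in_Ksub[OF 2(1)] by blast
  then have "symm (par_sign n) q - frag_cmul (par_sign n) (symm (par_sign n) p) \<in> Ksub n"
    using 2(2) par_sign_cases by (simp add: symm_mirror frag_cmul_diff_right)
  moreover have "sign_form q = - sign_form p"
    using 2 rot_orbit_invariants by (simp add: sign_form_mirror)
  ultimately show ?thesis
    using that by blast
qed

lemma symm_dih_orbit_in_Ksub_pos: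
  "par_sign n = 1 \<Longrightarrow> q \<in> dih_orbit p \<Longrightarrow> symm 1 q - symm 1 p \<in> Ksub n"
  by (metis frag_cmul_one symm_dih_orbit_cases)

lemma symm_dih_orbit_in_Ksub_neg:
  "par_sign n = -1 \<Longrightarrow> q \<in> dih_orbit p \<Longrightarrow>
     symm (-1) q - symm (-1) p \<in> Ksub n \<or> symm (-1) q + symm (-1) p \<in> Ksub n"
  by (metis diff_minus_eq_add frag_cmul_minus_one symm_dih_orbit_cases)

lemma two_symm_diagonal_in_Ksub:
  assumes "par_sign n = -1" "fst q = snd q"
  shows "frag_cmul 2 (symm (par_sign n) q) \<in> Ksub n"
proof -
  have "mirror q = antipode q"
    using assms(2) by (cases q) (simp add: antipode_def mirror_Pair)
  then have "symm (par_sign n) (mirror q) - symm (par_sign n) q \<in> Ksub n"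
    using symm_rot_orbit_in_Ksub antipode_in_rot_orbit by metis
  moreover have "symm (par_sign n) (mirror q) = - symm (par_sign n) q"
    using symm_mirror[of "par_sign n" q] assms(1) by simp
  moreover have "- symm (par_sign n) q - symm (par_sign n) q = - frag_cmul 2 (symm (par_sign n) q)"
    by (rule poly_mapping_eqI) (simp add: lookup_minus)
  ultimately have "- frag_cmul 2 (symm (par_sign n) q) \<in> Ksub n"
    by metis
  then show ?thesis
    using Ksub_uminus by fastforce
qed

section \<open>Coordinates on the quotient\<close>

text \<open>The basis of the free part must consist of sets of fragments: a point u of positive sum is
  encoded as label 1 {u}, a dihedral orbit D as label 2 D, and (for s = -1) a point w of sum
  zero as label 3 {w}.\<close>

definition label :: "int \<Rightarrow> point set \<Rightarrow> (point \<Rightarrow>\<^sub>0 int) set" where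
  "label k D = (\<lambda>p. frag_cmul k (frag_of p)) ` D"

definition label_points :: "int \<Rightarrow> (point \<Rightarrow>\<^sub>0 int) set \<Rightarrow> point set" where
  "label_points k b = {p. frag_cmul k (frag_of p) \<in> b}"

lemma frag_cmul_frag_of_eq_iff:
  assumes "k \<noteq> 0" "j \<noteq> 0"
  shows "frag_cmul k (frag_of p) = frag_cmul j (frag_of q) \<longleftrightarrow> k = j \<and> p = q"
proof
  assume "frag_cmul k (frag_of p) = frag_cmul j (frag_of q)"
  then have "Poly_Mapping.lookup (frag_cmul k (frag_of p)) p
             = Poly_Mapping.lookup (frag_cmul j (frag_of q)) p"
    by simp
  with assms show "k = j \<and> p = q"
    by (auto split: if_splits)
qed auto

lemma label_points_label:
  "k \<noteq> 0 \<Longrightarrow> j \<noteq> 0 \<Longrightarrow> label_points k (label j D) = (if k = j then D else {})"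
  by (auto simp: label_points_def label_def frag_cmul_frag_of_eq_iff)

definition free_basis :: "int \<Rightarrow> (point \<Rightarrow>\<^sub>0 int) set set" where
  "free_basis s =
     (\<lambda>u. label 1 {u}) ` {u. psum u > 0}
     \<union> (\<lambda>p. label 2 (dih_orbit p)) ` {p. s = 1 \<or> sign_form p \<noteq> 0}
     \<union> (\<lambda>w. label 3 {w}) ` {w. s \<noteq> 1 \<and> psum w = 0}"

definition tors_basis :: "int \<Rightarrow> (point \<Rightarrow>\<^sub>0 int) set" where
  "tors_basis s =
     (if s = 1 then frag_of ` {w. psum w = 0 \<and> fst w > 0}
      else (\<lambda>c. frag_of (c, c)) ` {c. c > 0})"

abbreviation target :: "int \<Rightarrow> (((point \<Rightarrow>\<^sub>0 int) set \<Rightarrow>\<^sub>0 int) \<times> (point \<Rightarrow>\<^sub>0 int) set) monoid"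
  where "target s \<equiv> free_Abelian_group (free_basis s) \<times>\<times> sym_diff_group (tors_basis s)"

definition axis_scale :: "point \<Rightarrow> int" where
  "axis_scale p = max \<bar>fst p\<bar> \<bar>snd p\<bar>"

text \<open>For psum p < 0 the coordinates of [p] come from [p] = symm s p - s [mirror p]: symm s p
  goes to plus or minus its orbit, the sign being read off the sign form. On a line orbit with
  s = 1, symm s p is twice the class of the zero-sum point w with fst w \<le> 0, and
  [w] - [-w] has order 2; on an axis orbit with s = -1 the class of symm s p has order 2 and is
  recorded by the diagonal point (c, c) of the orbit with c > 0.\<close>

definition orbit_coord :: "int \<Rightarrow> point \<Rightarrow> ((point \<Rightarrow>\<^sub>0 int) set \<Rightarrow>\<^sub>0 int)" where
  "orbit_coord s p =
     (if line_type p then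
        (if s = 1 then frag_cmul (if psum p = 0 then 1 else 2) (frag_of (label 2 (dih_orbit p)))
         else if psum p = 0 then frag_of (label 3 {p}) else 0)
      else if axis_type p then (if s = 1 then frag_of (label 2 (dih_orbit p)) else 0)
      else frag_cmul (if sign_form p > 0 then 1 else s) (frag_of (label 2 (dih_orbit p))))"

definition free_coord :: "int \<Rightarrow> point \<Rightarrow> ((point \<Rightarrow>\<^sub>0 int) set \<Rightarrow>\<^sub>0 int)" where
  "free_coord s p =
     (if psum p > 0 then frag_of (label 1 {p})
      else (if psum p < 0 then frag_cmul (- s) (frag_of (label 1 {mirror p})) else 0)
           + orbit_coord s p)"

definition tors_coord :: "int \<Rightarrow> point \<Rightarrow> ((point \<Rightarrow>\<^sub>0 int) \<Rightarrow>\<^sub>0 int)" where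
  "tors_coord s p =
     (if s = 1 then (if psum p = 0 \<and> fst p > 0 then frag_of (frag_of p) else 0)
      else (if psum p < 0 \<and> axis_type p then frag_of (frag_of (axis_scale p, axis_scale p)) else 0))"

definition symm_free_coord :: "int \<Rightarrow> point \<Rightarrow> ((point \<Rightarrow>\<^sub>0 int) set \<Rightarrow>\<^sub>0 int)" where
  "symm_free_coord s v =
     (if line_type v then (if s = 1 then frag_cmul 2 (frag_of (label 2 (dih_orbit v))) else 0)
      else if axis_type v then (if s = 1 then frag_of (label 2 (dih_orbit v)) else 0)
      else frag_cmul (if sign_form v > 0 then 1 else s) (frag_of (label 2 (dih_orbit v))))"

definition symm_tors_coord :: "int \<Rightarrow> point \<Rightarrow> ((point \<Rightarrow>\<^sub>0 int) \<Rightarrow>\<^sub>0 int)" where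
  "symm_tors_coord s v =
     (if s \<noteq> 1 \<and> axis_type v then frag_of (frag_of (axis_scale v, axis_scale v)) else 0)"

definition even_frag :: "('a \<Rightarrow>\<^sub>0 int) \<Rightarrow> bool" where
  "even_frag z \<longleftrightarrow> (\<forall>t. even (Poly_Mapping.lookup z t))"

definition odd_keys :: "('a \<Rightarrow>\<^sub>0 int) \<Rightarrow> 'a set" where
  "odd_keys z = {t. odd (Poly_Mapping.lookup z t)}"

definition coord :: "int \<Rightarrow> (point \<Rightarrow>\<^sub>0 int) \<Rightarrow> ((point \<Rightarrow>\<^sub>0 int) set \<Rightarrow>\<^sub>0 int) \<times> (point \<Rightarrow>\<^sub>0 int) set"
  where "coord s x = (frag_extend (free_coord s) x, odd_keys (frag_extend (tors_coord s) x))"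

lemma frag_extend_symm: "frag_extend f (symm s v) = f v + frag_cmul s (f (mirror v))"
  by (simp add: symm_def frag_extend_add frag_extend_cmul)

lemma symm_free_coord_rot: "symm_free_coord s (rot v) = symm_free_coord s v"
  by (simp add: symm_free_coord_def line_type_rot axis_type_rot sign_form_rot dih_orbit_rot)

lemma axis_scale_rot: "axis_type v \<Longrightarrow> axis_scale (rot v) = axis_scale v"
  by (cases v) (auto simp: axis_type_def axis_scale_def rot_Pair)

lemma axis_scale_mirror: "axis_scale (mirror v) = axis_scale v"
  by (simp add: axis_scale_def mirror_def max.commute)

lemma symm_tors_coord_rot: "symm_tors_coord s (rot v) = symm_tors_coord s v"
  by (simp add: symm_tors_coord_def axis_type_rot axis_scale_rot)

lemma frag_extend_free_coord_symm:
  assumes s: "s \<in> {1, -1}"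
  shows "frag_extend (free_coord s) (symm s v) = symm_free_coord s v"
  unfolding frag_extend_symm
proof (rule poly_mapping_eqI)
  fix x
  have M: "psum (mirror v) = - psum v" "line_type (mirror v) = line_type v"
    "axis_type (mirror v) = axis_type v" "sign_form (mirror v) = - sign_form v"
    "dih_orbit (mirror v) = dih_orbit v"
    by (simp_all add: psum_mirror line_type_mirror axis_type_mirror sign_form_mirror dih_orbit_mirror)
  have fr: "sign_form v \<noteq> 0 \<longleftrightarrow> \<not> line_type v \<and> \<not> axis_type v"
    by (rule sign_form_nonzero_iff)
  consider "psum v > 0" | "psum v < 0" | "psum v = 0"
    by linarith
  then show "Poly_Mapping.lookup (free_coord s v + frag_cmul s (free_coord s (mirror v))) x
             = Poly_Mapping.lookup (symm_free_coord s v) x"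
  proof cases
    case 3
    then show ?thesis
      using s M fr line_type_if_psum_zero[of v] mirror_fixed[of v]
      by (auto simp: free_coord_def orbit_coord_def symm_free_coord_def lookup_add)
  qed (use s M fr in \<open>auto simp: free_coord_def orbit_coord_def symm_free_coord_def lookup_add\<close>)
qed

lemma even_frag_tors_coord_symm:
  assumes s: "s \<in> {1, -1}"
  shows "even_frag (frag_extend (tors_coord s) (symm s v) - symm_tors_coord s v)"
  unfolding frag_extend_symm even_frag_def
proof
  fix x
  have M: "psum (mirror v) = - psum v" "axis_type (mirror v) = axis_type v"
    "axis_scale (mirror v) = axis_scale v"
    by (simp_all add: psum_mirror axis_type_mirror axis_scale_mirror)
  have zero_sum: "psum v = 0 \<Longrightarrow> \<not> axis_type v"
    using line_type_if_psum_zero axis_type_def by blast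
  consider "psum v > 0" | "psum v < 0" | "psum v = 0"
    by linarith
  then show "even (Poly_Mapping.lookup
      (tors_coord s v + frag_cmul s (tors_coord s (mirror v)) - symm_tors_coord s v) x)"
  proof cases
    case 3
    then show ?thesis
      using s M zero_sum mirror_fixed[of v]
      by (auto simp: tors_coord_def symm_tors_coord_def lookup_add lookup_minus)
  qed (use s M in \<open>auto simp: tors_coord_def symm_tors_coord_def lookup_add lookup_minus\<close>)
qed

lemma odd_keys_add: "odd_keys (a + b) = sym_diff (odd_keys a) (odd_keys b)"
  by (auto simp: odd_keys_def lookup_add)

lemma odd_keys_diff: "odd_keys (a - b) = sym_diff (odd_keys a) (odd_keys b)"
  by (auto simp: odd_keys_def lookup_minus)

lemma odd_keys_subset_keys: "odd_keys z \<subseteq> Poly_Mapping.keys z"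
  by (auto simp: odd_keys_def in_keys_iff)

lemma odd_keys_empty_iff: "odd_keys z = {} \<longleftrightarrow> even_frag z"
  by (auto simp: odd_keys_def even_frag_def)

lemma odd_keys_eq_if_even_diff: "even_frag (a - b) \<Longrightarrow> odd_keys a = odd_keys b"
  by (auto simp: even_frag_def odd_keys_def lookup_minus)

lemma odd_keys_frag_of: "odd_keys (frag_of t) = {t}"
  by (auto simp: odd_keys_def)

lemma odd_keys_zero: "odd_keys 0 = {}"
  by (auto simp: odd_keys_def)

lemma coord_symm:
  "s \<in> {1, -1} \<Longrightarrow> coord s (symm s v) = (symm_free_coord s v, odd_keys (symm_tors_coord s v))"
  using frag_extend_free_coord_symm odd_keys_eq_if_even_diff[OF even_frag_tors_coord_symm] by (simp add: coord_def)

lemma coord_frag_of: "coord s (frag_of p) = (free_coord s p, odd_keys (tors_coord s p))"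
  by (simp add: coord_def)

lemma coord_zero: "coord s 0 = (0, {})"
  by (simp add: coord_def odd_keys_zero)

lemma coord_add:
  "coord s (x + y) = (fst (coord s x) + fst (coord s y), sym_diff (snd (coord s x)) (snd (coord s y)))"
  by (simp add: coord_def frag_extend_add odd_keys_add)

lemma coord_diff:
  "coord s (x - y) = (fst (coord s x) - fst (coord s y), sym_diff (snd (coord s x)) (snd (coord s y)))"
  by (simp add: coord_def frag_extend_diff odd_keys_diff)

lemma coord_Kgen: "coord (par_sign n) (Kgen n a b) = (0, {})"
proof -
  have "s \<in> {1, -1} \<Longrightarrow> coord s (symm s v - symm s (rot v)) = (0, {})" for s v
    by (simp add: coord_diff coord_symm symm_free_coord_rot symm_tors_coord_rot)
  then show ?thesis
    using par_sign_cases by (simp add: Kgen_eq_symm_diff)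
qed

lemma keys_frag_cmul_frag_of: "Poly_Mapping.keys (frag_cmul c (frag_of X)) \<subseteq> {X}"
  using keys_cmul[of c "frag_of X"] by simp

lemma keys_free_coord:
  assumes s: "s \<in> {1, -1}"
  shows "Poly_Mapping.keys (free_coord s p) \<subseteq> free_basis s"
proof -
  have "Poly_Mapping.keys (orbit_coord s p)
        \<subseteq> (if s = 1 \<or> sign_form p \<noteq> 0 then {label 2 (dih_orbit p)} else {})
           \<union> (if s \<noteq> 1 \<and> psum p = 0 then {label 3 {p}} else {})"
    using s sign_form_nonzero_iff[of p] keys_frag_cmul_frag_of by (auto simp: orbit_coord_def)
  also have "\<dots> \<subseteq> free_basis s"
    unfolding free_basis_def by auto
  finally have "Poly_Mapping.keys (orbit_coord s p) \<subseteq> free_basis s" .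
  moreover have "psum p < 0 \<Longrightarrow> label 1 {mirror p} \<in> free_basis s"
    "psum p > 0 \<Longrightarrow> label 1 {p} \<in> free_basis s"
    unfolding free_basis_def by (auto simp: psum_mirror)
  ultimately show ?thesis
    using keys_frag_cmul_frag_of[of "-s" "label 1 {mirror p}"] keys_add[of _ "orbit_coord s p"]
    by (auto simp: free_coord_def)
qed

lemma keys_tors_coord: "Poly_Mapping.keys (tors_coord s p) \<subseteq> tors_basis s"
proof -
  have "axis_type p \<Longrightarrow> axis_scale p > 0"
    using axis_type_nonzero[of p] by (cases p) (auto simp: axis_scale_def)
  then show ?thesis
    unfolding tors_coord_def tors_basis_def by (auto intro: imageI)
qed

lemma coord_in_carrier:
  assumes s: "s \<in> {1, -1}"
  shows "coord s x \<in> carrier (target s)"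
proof -
  have "odd_keys (frag_extend (tors_coord s) x) \<subseteq> Poly_Mapping.keys (frag_extend (tors_coord s) x)"
    by (rule odd_keys_subset_keys)
  also have "\<dots> \<subseteq> tors_basis s"
    using keys_frag_extend[of "tors_coord s" x] keys_tors_coord by blast
  finally have "finite (odd_keys (frag_extend (tors_coord s) x))"
    "odd_keys (frag_extend (tors_coord s) x) \<subseteq> tors_basis s"
    using finite_subset[OF odd_keys_subset_keys finite_keys] by blast+
  moreover have "Poly_Mapping.keys (frag_extend (free_coord s) x) \<subseteq> free_basis s"
    using keys_frag_extend[of "free_coord s" x] keys_free_coord[OF s] by blast
  ultimately show ?thesis
    by (simp add: coord_def sym_diff_group_def)
qed

lemma group_hom_coord:
  assumes s: "s \<in> {1, -1}"
  shows "group_hom LaurentA (target s) (coord s)"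
proof -
  have "group (target s)"
    using DirProd_group[OF group_free_Abelian_group comm_group.axioms(2)[OF comm_group_sym_diff_group]] .
  moreover have "coord s \<in> hom LaurentA (target s)"
    using coord_in_carrier[OF s]
    by (intro homI)
       (auto simp: coord_def frag_extend_add odd_keys_add sym_diff_group_def LaurentA_def
             simp del: carrier_DirProd)
  ultimately show ?thesis
    by (simp add: group_hom_def group_hom_axioms_def group_LaurentA)
qed

lemma Ksub_subset_kernel_coord: "Ksub n \<subseteq> kernel LaurentA (target (par_sign n)) (coord (par_sign n))"
proof -
  interpret group_hom LaurentA "target (par_sign n)" "coord (par_sign n)"
    using group_hom_coord par_sign_cases by blast
  have "{Kgen n a b | a b. True} \<subseteq> kernel LaurentA (target (par_sign n)) (coord (par_sign n))"
    using coord_Kgen by (auto simp: kernel_def sym_diff_group_def)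
  then show ?thesis
    unfolding Ksub_def by (rule group.generate_subgroup_incl[OF group_LaurentA _ subgroup_kernel])
qed

section \<open>Orbit representatives\<close>

lemma rot_orbit_subset_dih_orbit: "rot_orbit p \<subseteq> dih_orbit p"
  by (simp add: dih_orbit_def)

lemma rot_orbit_neg_psum: "psum p \<noteq> 0 \<Longrightarrow> \<exists>q\<in>rot_orbit p. psum q < 0"
  using antipode_in_rot_orbit[of p] psum_antipode[of p] rot_orbit_def[of p]
  by (cases "psum p < 0") auto

lemma nonline_orbit_rep:
  assumes "\<not> line_type p"
  shows "\<exists>q\<in>dih_orbit p. psum q < 0 \<and> sign_form q \<ge> 0"
proof -
  obtain q0 where q0: "q0 \<in> dih_orbit p" "sign_form q0 \<ge> 0"
    using self_in_dih_orbit mirror_in_dih_orbit sign_form_mirror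
    by (metis neg_0_le_iff_le nle_le)
  have "\<not> line_type q0"
    using assms dih_orbit_invariants(1)[OF q0(1)] by simp
  then obtain q where q: "q \<in> rot_orbit q0" "psum q < 0"
    using rot_orbit_neg_psum line_type_if_psum_zero by blast
  then have "q \<in> dih_orbit p"
    using rot_orbit_subset_dih_orbit dih_orbit_eq[OF q0(1)] by blast
  with q q0 rot_orbit_invariants[OF q(1)] show ?thesis
    by auto
qed

lemma line_orbit_rep:
  assumes "line_type p"
  shows "\<exists>w\<in>dih_orbit p. psum w = 0 \<and> fst w \<le> 0"
proof -
  obtain a b where p: "p = (a, b)"
    by (cases p)
  have "psum p = 0 \<or> psum (rot p) = 0 \<or> psum (rot (rot p)) = 0"
    using assms by (auto simp: p line_type_def psum_def rot_Pair)
  moreover have "rot p \<in> dih_orbit p" "rot (rot p) \<in> dih_orbit p"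
    by (simp_all add: dih_orbit_def rot_orbit_def)
  ultimately obtain w where w: "w \<in> dih_orbit p" "psum w = 0"
    using self_in_dih_orbit by blast
  have "antipode w \<in> dih_orbit p"
    using antipode_in_dih_orbit dih_orbit_eq[OF w(1)] by blast
  moreover have "psum (antipode w) = 0" "fst w \<le> 0 \<or> fst (antipode w) \<le> 0"
    using w(2) by (auto simp: psum_def antipode_def)
  ultimately show ?thesis
    using w by blast
qed

lemma line_orbit_zero_psum:
  assumes "psum p = 0" "w \<in> dih_orbit p" "psum w = 0"
  shows "w = p \<or> w = antipode p"
proof -
  obtain a where p: "p = (a, - a)"
    using assms(1) by (cases p) (simp add: psum_def eq_neg_iff_add_eq_0)
  show ?thesis
    using assms(2,3) unfolding p dih_orbit_explicit
    by (elim insertE emptyE) (simp_all add: psum_def antipode_def)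
qed

lemma axis_orbit_diagonal:
  assumes "axis_type p" "psum p < 0"
  shows "(- axis_scale p, - axis_scale p) \<in> dih_orbit p"
proof -
  obtain a b where p: "p = (a, b)"
    by (cases p)
  from assms have neg: "a + b < 0"
    by (simp add: p psum_def)
  from assms have "a = 0 \<or> b = 0 \<or> a = b"
    by (auto simp: p axis_type_def)
  then show ?thesis
  proof (elim disjE)
    assume "a = 0"
    then show ?thesis
      using neg by (simp add: p axis_scale_def dih_orbit_explicit)
  next
    assume "b = 0"
    then show ?thesis
      using neg by (simp add: p axis_scale_def dih_orbit_explicit)
  next
    assume "a = b"
    then show ?thesis
      using neg by (simp add: p axis_scale_def dih_orbit_explicit)
  qed
qed

definition line_rep :: "point set \<Rightarrow> point" where
  "line_rep D = (SOME w. w \<in> D \<and> psum w = 0 \<and> fst w \<le> 0)"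

definition nonline_rep :: "point set \<Rightarrow> point" where
  "nonline_rep D = (SOME q. q \<in> D \<and> psum q < 0 \<and> sign_form q \<ge> 0)"

lemma line_rep_spec:
  assumes "line_type p"
  shows "line_rep (dih_orbit p) \<in> dih_orbit p" "psum (line_rep (dih_orbit p)) = 0"
    "fst (line_rep (dih_orbit p)) \<le> 0"
  using someI_ex[OF line_orbit_rep[OF assms, unfolded Bex_def]] by (simp_all add: line_rep_def)

lemma nonline_rep_spec:
  assumes "\<not> line_type p"
  shows "nonline_rep (dih_orbit p) \<in> dih_orbit p" "psum (nonline_rep (dih_orbit p)) < 0"
    "sign_form (nonline_rep (dih_orbit p)) \<ge> 0"
  using someI_ex[OF nonline_orbit_rep[OF assms, unfolded Bex_def]]
  by (simp_all add: nonline_rep_def)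

section \<open>The kernel of the coordinate map\<close>

definition orbit_lift :: "int \<Rightarrow> point set \<Rightarrow> (point \<Rightarrow>\<^sub>0 int)" where
  "orbit_lift s D =
     (if s = 1 \<and> (\<exists>p\<in>D. line_type p) then frag_of (line_rep D) else symm s (nonline_rep D))"

definition basis_lift :: "int \<Rightarrow> (point \<Rightarrow>\<^sub>0 int) set \<Rightarrow> (point \<Rightarrow>\<^sub>0 int)" where
  "basis_lift s b =
     (if label_points 1 b \<noteq> {} then frag_of (SOME u. u \<in> label_points 1 b)
      else if label_points 2 b \<noteq> {} then orbit_lift s (label_points 2 b)
      else frag_of (SOME w. w \<in> label_points 3 b))"

definition tors_lift_point :: "int \<Rightarrow> point \<Rightarrow> (point \<Rightarrow>\<^sub>0 int)" where
  "tors_lift_point s w =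
     (if s = 1 then (if psum w = 0 \<and> fst w > 0 then frag_of w - frag_of (antipode w) else 0)
      else (if fst w = snd w \<and> fst w > 0 then symm s (antipode w) else 0))"

text \<open>A torsion generator is a fragment frag_of w, so frag_extend (tors_lift_point s) sends it
  to tors_lift_point s w.\<close>

definition point_lift :: "int \<Rightarrow> point \<Rightarrow> (point \<Rightarrow>\<^sub>0 int)" where
  "point_lift s p = frag_extend (basis_lift s) (free_coord s p)
     + frag_extend (frag_extend (tors_lift_point s)) (tors_coord s p)"

lemma basis_lift_label_1: "basis_lift s (label 1 {u}) = frag_of u"
  by (simp add: basis_lift_def label_points_label)

lemma basis_lift_orbit: "basis_lift s (label 2 (dih_orbit p)) = orbit_lift s (dih_orbit p)"
proof -
  have "dih_orbit p \<noteq> {}"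
    using self_in_dih_orbit by blast
  then show ?thesis
    by (simp add: basis_lift_def label_points_label)
qed

lemma basis_lift_label_3: "basis_lift s (label 3 {w}) = frag_of w"
  by (simp add: basis_lift_def label_points_label)

lemma orbit_lift_line:
  "line_type p \<Longrightarrow> orbit_lift 1 (dih_orbit p) = frag_of (line_rep (dih_orbit p))"
  using self_in_dih_orbit[of p] by (auto simp: orbit_lift_def)

lemma orbit_lift_nonline:
  "\<not> line_type p \<Longrightarrow> orbit_lift s (dih_orbit p) = symm s (nonline_rep (dih_orbit p))"
  using dih_orbit_invariants(1) by (auto simp: orbit_lift_def)

lemma tors_coord_nonaxis: "psum p < 0 \<Longrightarrow> \<not> axis_type p \<Longrightarrow> tors_coord s p = 0"
  by (simp add: tors_coord_def)

lemma symm_minus_lift_line: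
  assumes s: "s = par_sign n" and p: "line_type p" "psum p < 0"
  shows "symm s p - frag_extend (basis_lift s) (orbit_coord s p) \<in> Ksub n"
proof (cases "s = 1")
  case True
  define w where "w = line_rep (dih_orbit p)"
  have w: "w \<in> dih_orbit p" "psum w = 0"
    using line_rep_spec[OF p(1)] by (simp_all add: w_def)
  have "frag_extend (basis_lift s) (orbit_coord s p) = symm 1 w"
    using True p w(2) self_in_dih_orbit
    by (auto simp: orbit_coord_def frag_extend_cmul basis_lift_orbit orbit_lift_line w_def
                   symm_psum_zero_pos)
  then show ?thesis
    using symm_dih_orbit_in_Ksub_pos[OF _ w(1)] True s Ksub_minus_commute by simp
next
  case False
  then have s': "s = -1"
    using s par_sign_cases by auto
  obtain w where w: "w \<in> dih_orbit p" "psum w = 0"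
    using line_orbit_rep[OF p(1)] by blast
  have "symm s p \<in> Ksub n"
    using symm_dih_orbit_in_Ksub_neg[OF _ w(1)] s s' Ksub_uminus
    by (force simp: symm_psum_zero_neg[OF w(2)])
  then show ?thesis
    using s' p by (simp add: orbit_coord_def)
qed

lemma symm_minus_lift_axis:
  assumes s: "s = par_sign n" and p: "axis_type p" "psum p < 0"
  shows "symm s p - (frag_extend (basis_lift s) (orbit_coord s p)
                     + frag_extend (frag_extend (tors_lift_point s)) (tors_coord s p)) \<in> Ksub n"
proof (cases "s = 1")
  case True
  have "\<not> line_type p"
    using p(1) axis_type_def by blast
  with True p show ?thesis
    using symm_dih_orbit_in_Ksub_pos[OF _ nonline_rep_spec(1)] s Ksub_minus_commute
    by (simp add: orbit_coord_def tors_coord_def basis_lift_orbit orbit_lift_nonline)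
next
  case False
  then have s': "s = -1"
    using s par_sign_cases by auto
  define c where "c = axis_scale p"
  have "c > 0"
    using axis_type_nonzero[OF p(1)] by (cases p) (auto simp: c_def axis_scale_def)
  then have lift: "frag_extend (basis_lift s) (orbit_coord s p)
      + frag_extend (frag_extend (tors_lift_point s)) (tors_coord s p) = symm s (- c, - c)"
    using s' p by (simp add: orbit_coord_def axis_type_def tors_coord_def tors_lift_point_def
                             antipode_def c_def)
  have two: "frag_cmul 2 (symm s (- c, - c)) \<in> Ksub n"
    using two_symm_diagonal_in_Ksub[of n "(- c, - c)"] s s' by simp
  have "symm s (- c, - c) - symm s p \<in> Ksub n \<or> symm s (- c, - c) + symm s p \<in> Ksub n"
    using symm_dih_orbit_in_Ksub_neg[OF _ axis_orbit_diagonal[OF p]] s s' by (simp add: c_def)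
  moreover have "symm s p - symm s (- c, - c)
      = (symm s (- c, - c) + symm s p) - frag_cmul 2 (symm s (- c, - c))"
    by (rule poly_mapping_eqI) (simp add: lookup_add lookup_minus)
  ultimately have "symm s p - symm s (- c, - c) \<in> Ksub n"
    using Ksub_minus_commute Ksub_diff[OF _ two] by metis
  then show ?thesis
    by (simp add: lift)
qed

lemma symm_minus_lift_free:
  assumes s: "s = par_sign n" and p: "sign_form p \<noteq> 0"
  shows "symm s p - frag_extend (basis_lift s) (orbit_coord s p) \<in> Ksub n"
proof -
  have p': "\<not> line_type p" "\<not> axis_type p"
    using p sign_form_nonzero_iff by auto
  define q where "q = nonline_rep (dih_orbit p)"
  have q: "q \<in> dih_orbit p" "sign_form q \<ge> 0"
    using nonline_rep_spec[OF p'(1)] by (simp_all add: q_def)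
  have "\<bar>sign_form q\<bar> = \<bar>sign_form p\<bar>"
    using dih_orbit_invariants(3)[OF q(1)] .
  with q(2) p have q_pos: "sign_form q > 0"
    by linarith
  define \<epsilon> where "\<epsilon> = (if sign_form p > 0 then 1 else s)"
  have lift: "frag_extend (basis_lift s) (orbit_coord s p) = frag_cmul \<epsilon> (symm s q)"
    using p' self_in_dih_orbit
    by (auto simp: orbit_coord_def frag_extend_cmul basis_lift_orbit orbit_lift_nonline
                   q_def \<epsilon>_def)
  from q(1) show ?thesis
  proof (cases rule: symm_dih_orbit_cases[where n = n])
    case 1
    then show ?thesis
      using q_pos Ksub_minus_commute by (simp add: lift \<epsilon>_def s[symmetric])
  next
    case 2
    then have "frag_cmul (- s) (symm s q - frag_cmul s (symm s p)) \<in> Ksub n"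
      using Ksub_cmul by (simp add: s[symmetric])
    moreover have "frag_cmul (- s) (symm s q - frag_cmul s (symm s p))
                   = symm s p - frag_cmul s (symm s q)"
      using s par_sign_cases[of n] by (intro poly_mapping_eqI) (auto simp: lookup_minus)
    ultimately show ?thesis
      using 2 q_pos by (simp add: lift \<epsilon>_def s[symmetric])
  qed
qed

lemma frag_of_minus_point_lift_zero_psum:
  assumes s: "s = par_sign n" and p: "psum p = 0"
  shows "frag_of p - point_lift s p \<in> Ksub n"
proof (cases "s = 1")
  case True
  have line: "line_type p"
    using p line_type_if_psum_zero by blast
  define w where "w = line_rep (dih_orbit p)"
  have w: "w = p \<or> w = antipode p" "fst w \<le> 0"
    using line_orbit_zero_psum[OF p] line_rep_spec[OF line] by (simp_all add: w_def)
  have lift: "frag_extend (basis_lift 1) (free_coord 1 p) = frag_of w"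
    using line p by (simp add: free_coord_def orbit_coord_def basis_lift_orbit
                                   orbit_lift_line w_def)
  show ?thesis
  proof (cases "fst p > 0")
    case True
    then have "w = antipode p"
      using w by (auto simp: antipode_def)
    with True \<open>s = 1\<close> p show ?thesis
      by (simp add: point_lift_def lift tors_coord_def tors_lift_point_def Ksub_zero)
  next
    case False
    then have "w = p"
      using w p by (cases p) (auto simp: antipode_def psum_def)
    with False \<open>s = 1\<close> show ?thesis
      by (simp add: point_lift_def lift tors_coord_def Ksub_zero)
  qed
next
  case False
  then have "s = -1"
    using s par_sign_cases by auto
  with p show ?thesis
    by (simp add: point_lift_def free_coord_def orbit_coord_def tors_coord_def
                  line_type_if_psum_zero basis_lift_label_3 Ksub_zero)
qed

lemma frag_of_minus_point_lift_neg_psum: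
  assumes s: "s = par_sign n" and p: "psum p < 0"
  shows "frag_of p - point_lift s p \<in> Ksub n"
proof -
  have eq: "frag_of p - point_lift s p
        = symm s p - (frag_extend (basis_lift s) (orbit_coord s p)
                      + frag_extend (frag_extend (tors_lift_point s)) (tors_coord s p))"
    using p by (intro poly_mapping_eqI)
               (simp add: point_lift_def free_coord_def symm_def frag_extend_add frag_extend_cmul
                          basis_lift_label_1 lookup_add lookup_minus del: minus_frag_cmul)
  consider "line_type p" | "axis_type p" | "sign_form p \<noteq> 0"
    using sign_form_nonzero_iff by blast
  then show ?thesis
  proof cases
    case 1
    then have "\<not> axis_type p"
      by (simp add: axis_type_def)
    with 1 p show ?thesis
      by (simp add: eq tors_coord_nonaxis symm_minus_lift_line[OF s])
  next
    case 3
    then have "\<not> axis_type p"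
      by (simp add: sign_form_nonzero_iff)
    with 3 p show ?thesis
      by (simp add: eq tors_coord_nonaxis symm_minus_lift_free[OF s])
  qed (use p eq symm_minus_lift_axis[OF s] in simp)
qed

lemma frag_of_minus_point_lift:
  assumes s: "s = par_sign n"
  shows "frag_of p - point_lift s p \<in> Ksub n"
proof -
  consider "psum p > 0" | "psum p < 0" | "psum p = 0"
    by linarith
  then show ?thesis
  proof cases
    case 1
    then have "tors_coord s p = 0"
      using s par_sign_cases by (auto simp: tors_coord_def)
    with 1 show ?thesis
      by (simp add: point_lift_def free_coord_def basis_lift_label_1 Ksub_zero)
  qed (use s frag_of_minus_point_lift_neg_psum frag_of_minus_point_lift_zero_psum in blast)+
qed

lemma frag_extend_fun_add: "frag_extend (\<lambda>x. f x + g x) c = frag_extend f c + frag_extend g c"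
  using subset_UNIV by (induction c rule: frag_induction) (auto simp: frag_extend_diff)

lemma frag_extend_fun_diff: "frag_extend (\<lambda>x. f x - g x) c = frag_extend f c - frag_extend g c"
  using subset_UNIV by (induction c rule: frag_induction) (auto simp: frag_extend_diff)

lemma frag_extend_frag_extend:
  "frag_extend f (frag_extend g c) = frag_extend (\<lambda>x. frag_extend f (g x)) c"
  using subset_UNIV by (induction c rule: frag_induction) (auto simp: frag_extend_diff)

lemma frag_cmul_frag_extend:
  "frag_cmul k (frag_extend f c) = frag_extend (\<lambda>x. frag_cmul k (f x)) c"
  by (simp add: frag_extend_def frag_cmul_sum mult.commute)

lemma Ksub_frag_extend_even:
  assumes "\<And>t. frag_cmul 2 (f t) \<in> Ksub n" "even_frag z"
  shows "frag_extend f z \<in> Ksub n"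
proof -
  have "frag_cmul (Poly_Mapping.lookup z t) (f t) \<in> Ksub n" for t
  proof -
    have "Poly_Mapping.lookup z t = Poly_Mapping.lookup z t div 2 * 2"
      using assms(2) by (simp add: even_frag_def)
    then have "frag_cmul (Poly_Mapping.lookup z t) (f t)
             = frag_cmul (Poly_Mapping.lookup z t div 2) (frag_cmul 2 (f t))"
      by (metis frag_cmul_cmul)
    then show ?thesis
      using Ksub_cmul[OF assms(1)] by simp
  qed
  then show ?thesis
    unfolding frag_extend_def by (intro Ksub_sum)
qed

lemma two_tors_lift_point_in_Ksub: "frag_cmul 2 (tors_lift_point (par_sign n) w) \<in> Ksub n"
proof (cases "par_sign n = 1")
  case True
  show ?thesis
  proof (cases "psum w = 0 \<and> fst w > 0")
    case w: True
    have "symm (par_sign n) (antipode w) - symm (par_sign n) w \<in> Ksub n"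
      using symm_rot_orbit_in_Ksub[OF antipode_in_rot_orbit] .
    moreover have "frag_cmul 2 (tors_lift_point 1 w) = symm 1 w - symm 1 (antipode w)"
      using w psum_antipode[of w]
      by (simp add: tors_lift_point_def symm_psum_zero_pos frag_cmul_diff_right)
    ultimately show ?thesis
      using True Ksub_minus_commute by simp
  qed (use True in \<open>auto simp: tors_lift_point_def Ksub_zero\<close>)
next
  case False
  then have "par_sign n = -1"
    using par_sign_cases by auto
  then show ?thesis
    using two_symm_diagonal_in_Ksub[of n "antipode w"]
    by (simp add: tors_lift_point_def antipode_def Ksub_zero)
qed

lemma minus_frag_extend_point_lift_in_Ksub: "x - frag_extend (point_lift (par_sign n)) x \<in> Ksub n"
proof -
  have "x - frag_extend (point_lift (par_sign n)) x
        = frag_extend (\<lambda>p. frag_of p - point_lift (par_sign n) p) x"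
    by (simp add: frag_extend_fun_diff frag_expansion[symmetric])
  also have "\<dots> \<in> Ksub n"
    by (rule Ksub_frag_extend) (rule frag_of_minus_point_lift[OF refl])
  finally show ?thesis .
qed

lemma kernel_coord_subset_Ksub:
  assumes "coord (par_sign n) x = (0, {})"
  shows "x \<in> Ksub n"
proof -
  let ?s = "par_sign n"
  have free: "frag_extend (free_coord ?s) x = 0"
    and tors: "even_frag (frag_extend (tors_coord ?s) x)"
    using assms by (simp_all add: coord_def odd_keys_empty_iff)
  have "point_lift ?s = (\<lambda>p. frag_extend (basis_lift ?s) (free_coord ?s p)
                  + frag_extend (frag_extend (tors_lift_point ?s)) (tors_coord ?s p))"
    by (simp add: point_lift_def fun_eq_iff)
  then have "frag_extend (point_lift ?s) x
      = frag_extend (basis_lift ?s) (frag_extend (free_coord ?s) x)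
        + frag_extend (frag_extend (tors_lift_point ?s)) (frag_extend (tors_coord ?s) x)"
    by (simp only: frag_extend_fun_add frag_extend_frag_extend)
  also have "\<dots> = frag_extend (frag_extend (tors_lift_point ?s)) (frag_extend (tors_coord ?s) x)"
    by (simp add: free)
  also have "\<dots> \<in> Ksub n"
  proof (rule Ksub_frag_extend_even[OF _ tors])
    show "frag_cmul 2 (frag_extend (tors_lift_point ?s) t) \<in> Ksub n" for t
      unfolding frag_cmul_frag_extend by (rule Ksub_frag_extend) (rule two_tors_lift_point_in_Ksub)
  qed
  finally have "frag_extend (point_lift ?s) x \<in> Ksub n" .
  then show ?thesis
    using Ksub_add[OF minus_frag_extend_point_lift_in_Ksub] by (metis diff_add_cancel)
qed

lemma kernel_coord: "kernel LaurentA (target (par_sign n)) (coord (par_sign n)) = Ksub n"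
  using kernel_coord_subset_Ksub Ksub_subset_kernel_coord
  by (fastforce simp: kernel_def sym_diff_group_def)

section \<open>Surjectivity of the coordinate map\<close>

lemma coord_hits_orbit:
  assumes s: "s \<in> {1, -1}" and p: "s = 1 \<or> sign_form p \<noteq> 0"
  shows "\<exists>y. coord s y = (frag_of (label 2 (dih_orbit p)), {})"
proof (cases "s = 1 \<and> line_type p")
  case True
  define w where "w = line_rep (dih_orbit p)"
  have w: "dih_orbit w = dih_orbit p" "psum w = 0" "fst w \<le> 0"
    using line_rep_spec[of p] True dih_orbit_eq by (simp_all add: w_def)
  then have "coord s (frag_of w) = (frag_of (label 2 (dih_orbit p)), {})"
    using True line_type_if_psum_zero[OF w(2)]
    by (simp add: coord_frag_of free_coord_def orbit_coord_def tors_coord_def odd_keys_zero)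
  then show ?thesis
    by blast
next
  case False
  then have nonline: "\<not> line_type p"
    using p sign_form_nonzero_iff by blast
  define q where "q = nonline_rep (dih_orbit p)"
  have q: "q \<in> dih_orbit p" "sign_form q \<ge> 0"
    using nonline_rep_spec[OF nonline] by (simp_all add: q_def)
  have "\<not> line_type q" "axis_type q = axis_type p" "\<bar>sign_form q\<bar> = \<bar>sign_form p\<bar>"
    using nonline dih_orbit_invariants[OF q(1)] by simp_all
  with q p have "coord s (symm s q) = (frag_of (label 2 (dih_orbit p)), {})"
    using dih_orbit_eq[OF q(1)] sign_form_nonzero_iff[of p] s
    by (auto simp: coord_symm symm_free_coord_def symm_tors_coord_def odd_keys_zero)
  then show ?thesis
    by blast
qed

lemma coord_hits_free_basis:
  assumes s: "s \<in> {1, -1}" and b: "b \<in> free_basis s"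
  shows "\<exists>y. coord s y = (frag_of b, {})"
  using b unfolding free_basis_def
proof (elim UnE imageE CollectE)
  fix u
  assume "b = label 1 {u}" "psum u > 0"
  moreover have "tors_coord s u = 0"
    using s \<open>psum u > 0\<close> by (auto simp: tors_coord_def)
  ultimately have "coord s (frag_of u) = (frag_of b, {})"
    by (simp add: coord_frag_of free_coord_def odd_keys_zero)
  then show ?thesis
    by blast
next
  fix w
  assume "b = label 3 {w}" "s \<noteq> 1 \<and> psum w = 0"
  then have "coord s (frag_of w) = (frag_of b, {})"
    by (simp add: coord_frag_of free_coord_def orbit_coord_def tors_coord_def odd_keys_zero
                  line_type_if_psum_zero)
  then show ?thesis
    by blast
qed (use s coord_hits_orbit in blast)

lemma coord_hits_tors_basis:
  assumes s: "s \<in> {1, -1}" and t: "t \<in> tors_basis s"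
  shows "\<exists>y. coord s y = (0, {t})"
proof (cases "s = 1")
  case True
  then obtain w where w: "t = frag_of w" "psum w = 0" "fst w > 0"
    using t by (auto simp: tors_basis_def)
  have "dih_orbit (antipode w) = dih_orbit w" "psum (antipode w) = 0" "fst (antipode w) < 0"
    using dih_orbit_eq[OF antipode_in_dih_orbit] w psum_antipode[of w]
    by (auto simp: antipode_def)
  with True w have "coord s (frag_of w - frag_of (antipode w)) = (0, {t})"
    by (simp add: coord_diff coord_frag_of free_coord_def orbit_coord_def tors_coord_def
                  line_type_if_psum_zero odd_keys_frag_of odd_keys_zero)
  then show ?thesis
    by blast
next
  case False
  with s obtain c where c: "s = -1" "t = frag_of (c, c)" "c > 0"
    using t by (auto simp: tors_basis_def)
  then have "axis_type (- c, - c)" "axis_scale (- c, - c) = c"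
    by (simp_all add: axis_type_def line_type_def psum_def axis_scale_def)
  with s c have "coord s (symm s (- c, - c)) = (0, {t})"
    by (simp add: coord_symm symm_free_coord_def symm_tors_coord_def axis_type_def odd_keys_frag_of)
  then show ?thesis
    by blast
qed

lemma coord_hits_free_part:
  assumes s: "s \<in> {1, -1}" and c: "Poly_Mapping.keys c \<subseteq> free_basis s"
  shows "\<exists>y. coord s y = (c, {})"
  using c
proof (induction c rule: frag_induction)
  case (diff a b)
  then obtain x y where "coord s x = (a, {})" "coord s y = (b, {})"
    by blast
  then have "coord s (x - y) = (a - b, {})"
    by (simp add: coord_diff)
  then show ?case
    by blast
qed (use coord_zero coord_hits_free_basis[OF s] in blast)+

lemma coord_hits_tors_part:
  assumes s: "s \<in> {1, -1}" and X: "finite X" "X \<subseteq> tors_basis s"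
  shows "\<exists>y. coord s y = (0, X)"
  using X
proof (induction X rule: finite_induct)
  case (insert t X)
  then obtain x y where "coord s x = (0, X)" "coord s y = (0, {t})"
    using coord_hits_tors_basis[OF s] by blast
  then have "coord s (x + y) = (0, insert t X)"
    using insert(2) by (auto simp: coord_add)
  then show ?case
    by blast
qed (use coord_zero in blast)

lemma coord_surj:
  assumes s: "s \<in> {1, -1}"
  shows "coord s ` carrier LaurentA = carrier (target s)"
proof
  show "coord s ` carrier LaurentA \<subseteq> carrier (target s)"
    using coord_in_carrier[OF s] by blast
next
  show "carrier (target s) \<subseteq> coord s ` carrier LaurentA"
  proof
    fix z
    assume "z \<in> carrier (target s)"
    then obtain c X where z: "z = (c, X)" "Poly_Mapping.keys c \<subseteq> free_basis s"
      "finite X" "X \<subseteq> tors_basis s"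
      by (cases z) (auto simp: sym_diff_group_def)
    obtain x y where "coord s x = (c, {})" "coord s y = (0, X)"
      using coord_hits_free_part[OF s z(2)] coord_hits_tors_part[OF s z(3,4)] by blast
    then have "coord s (x + y) = z"
      by (simp add: coord_add z(1))
    then show "z \<in> coord s ` carrier LaurentA"
      by force
  qed
qed

theorem mainTheorem8:
  fixes n :: int
  shows "\<exists>(S :: (int \<times> int \<Rightarrow>\<^sub>0 int) set set) (T :: (int \<times> int \<Rightarrow>\<^sub>0 int) set monoid).
           comm_group T \<and>
           (\<forall>x \<in> carrier T. x \<otimes>\<^bsub>T\<^esub> x = \<one>\<^bsub>T\<^esub>) \<and>
           (LaurentA Mod Ksub n) \<cong> (free_Abelian_group S \<times>\<times> T)"
proof -
  interpret group_hom LaurentA "target (par_sign n)" "coord (par_sign n)"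
    using group_hom_coord par_sign_cases by blast
  have "LaurentA Mod Ksub n \<cong> target (par_sign n)"
    using FactGroup_iso[OF coord_surj[OF par_sign_cases]] by (simp add: kernel_coord)
  then show ?thesis
    by (intro exI conjI ballI) (rule comm_group_sym_diff_group sym_diff_group_square)+
qed

end
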